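(* Let $v=v(z)=zM(z)$, where $M(z)=\frac{1-z-\sqrt{1-2z-3z^2}}{2z^2}$ is the Motzkin generating function (so $z=\frac{v}{1+v+v^2}$). For every integer $h\ge0$, the generating function, by number of nodes, of Retakh plane trees of height at most $2h$ (for $h=0$: of height at most $1$) is $$\frac{z}{1-z}\cdot\frac{1}{1-\dfrac{F_h}{1-z}}=v\,\frac{1-v^{2h+2}}{1-v^{2h+4}}$$ for $h\ge1$, where $F_h=\frac{v^2}{1+v+v^2}\frac{1-v^{2h}}{1-v^{2h+2}}$, and equals $\frac{z}{1-z}=\frac{v}{1+v^2}$ for $h=0$.
   Context: A Retakh plane tree is a plane (ordered rooted) tree in which every non-root leaf has depth $1$ or even depth (root depth $0$); the one-node tree is included. These correspond bijectively (a tree with $n+1$ nodes to a path of semilength $n$) to Dyck paths all of whose peaks are at level $1$ or at an even level. The height of a tree is the maximal depth of a node, i.e. the number of edges of a longest root-to-node path; it equals the maximal height of the corresponding Dyck path. *)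

theory Defs
  imports Complex_Main
begin

datatype ptree = Node "ptree list"

fun nodes :: "ptree \<Rightarrow> nat" where
  "nodes (Node ts) = Suc (sum_list (map nodes ts))"

fun height :: "ptree \<Rightarrow> nat" where
  "height (Node ts) = (if ts = [] then 0 else Suc (Max (set (map height ts))))"

fun leaf_depths :: "nat \<Rightarrow> ptree \<Rightarrow> nat set" where
  "leaf_depths d (Node ts) =
     (if ts = [] then {d} else \<Union> (set (map (leaf_depths (Suc d)) ts)))"

text \<open>Retakh plane tree: every non-root leaf has depth 1 or even depth (root at depth 0).
  The one-node tree is included (it has no non-root leaf).\<close>
definition retakh :: "ptree \<Rightarrow> bool" where
  "retakh t = (case t of Node ts \<Rightarrow>
      (\<forall>s\<in>set ts. \<forall>d\<in>leaf_depths 1 s. d = 1 \<or> even d))"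

definition retakh_count :: "nat \<Rightarrow> nat \<Rightarrow> nat" where
  "retakh_count H n = card {t. retakh t \<and> nodes t = n \<and> height t \<le> H}"

definition motzkinM :: "real \<Rightarrow> real" where
  "motzkinM z = (1 - z - sqrt (1 - 2*z - 3*z^2)) / (2 * z^2)"

definition vfun :: "real \<Rightarrow> real" where
  "vfun z = z * motzkinM z"

definition Ffun :: "nat \<Rightarrow> real \<Rightarrow> real" where
  "Ffun h v = v^2 / (1 + v + v^2) * ((1 - v^(2*h)) / (1 - v^(2*h+2)))"

end

theory Submission
  imports Defs "HOL-Analysis.FPS_Convergence"
begin

text \<open>A Retakh tree of height at most \<open>H\<close> is a root over a sequence of children, each a leaf
  or a tree of height below \<open>H\<close> whose leaves all lie at even depth. Let \<open>A k\<close> and \<open>B k\<close>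
  (\<open>odd_root_gf k\<close>, \<open>even_root_gf k\<close>) count trees of height below \<open>k\<close> all of whose leaves lie at even depth, when the root sits at odd
  resp. even depth. Removing the root gives \<open>A (k+1) = z (1/(1 - B k) - 1)\<close> (a leaf root is
  not allowed at odd depth) and \<open>B (k+1) = z/(1 - A k)\<close>, and Retakh trees of height at most
  \<open>H\<close> are counted by \<open>z/(1 - z - A H)\<close>. These are rational functions regular at 0, so the
  power series converge near 0, and under the substitution \<open>z = v/(1 + v + v\<^sup>2)\<close> the
  recursion telescopes to \<open>A (2h) = F h\<close>.\<close>

section \<open>Counting trees and forests\<close>

abbreviation forest_nodes :: "ptree list \<Rightarrow> nat" where
  "forest_nodes ts \<equiv> sum_list (map nodes ts)"

lemma nodes_neq_0 [simp]: "nodes t \<noteq> 0"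
  by (cases t) auto

lemma length_le_forest_nodes: "length ts \<le> forest_nodes ts"
proof (induction ts)
  case (Cons t ts)
  then show ?case by (cases t) auto
qed simp

lemma nodes_le_forest_nodes: "t \<in> set ts \<Longrightarrow> nodes t \<le> forest_nodes ts"
  using member_le_sum_list[of "nodes t" "map nodes ts"] by simp

lemma trees_of_size_Suc: "{t. nodes t = Suc n} = Node ` {ts. forest_nodes ts = n}"
proof (intro equalityI subsetI)
  fix t assume "t \<in> {t. nodes t = Suc n}"
  then show "t \<in> Node ` {ts. forest_nodes ts = n}" by (cases t) auto
qed auto

lemma finite_forests_of_size_if:
  assumes "\<And>m. m \<le> n \<Longrightarrow> finite {t. nodes t = m}"
  shows "finite {ts. forest_nodes ts = n}"
proof -
  have "{t. nodes t \<le> n} = (\<Union>m\<le>n. {t. nodes t = m})" by auto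
  then have "finite {t. nodes t \<le> n}" using assms by simp
  moreover have "{ts. forest_nodes ts = n} \<subseteq> {ts. set ts \<subseteq> {t. nodes t \<le> n} \<and> length ts \<le> n}"
    using length_le_forest_nodes nodes_le_forest_nodes by fastforce
  ultimately show ?thesis using finite_lists_length_le finite_subset by blast
qed

lemma finite_trees_of_size: "finite {t. nodes t = n}"
proof (induction n rule: less_induct)
  case (less n)
  show ?case
  proof (cases n)
    case 0
    then show ?thesis by simp
  next
    case (Suc m)
    then show ?thesis
      using less finite_forests_of_size_if[of m] by (simp add: trees_of_size_Suc)
  qed
qed

lemma finite_forests_of_size: "finite {ts. forest_nodes ts = n}"
  using finite_forests_of_size_if finite_trees_of_size by blast

lemma finite_trees_of_size_with: "finite {t. P t \<and> nodes t = n}"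
  by (rule finite_subset[OF _ finite_trees_of_size[of n]]) auto

definition count_trees :: "(ptree \<Rightarrow> bool) \<Rightarrow> nat \<Rightarrow> nat" where
  "count_trees P n = card {t. P t \<and> nodes t = n}"

definition tree_gf :: "(ptree \<Rightarrow> bool) \<Rightarrow> real fps" where
  "tree_gf P = Abs_fps (\<lambda>n. real (count_trees P n))"

definition forests :: "(ptree \<Rightarrow> bool) \<Rightarrow> nat \<Rightarrow> ptree list set" where
  "forests P n = {ts. (\<forall>s\<in>set ts. P s) \<and> forest_nodes ts = n}"

definition forest_gf :: "(ptree \<Rightarrow> bool) \<Rightarrow> real fps" where
  "forest_gf P = Abs_fps (\<lambda>n. real (card (forests P n)))"

lemma count_trees_0 [simp]: "count_trees P 0 = 0"
  by (simp add: count_trees_def)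

lemma fps_nth_tree_gf_0 [simp]: "fps_nth (tree_gf P) 0 = 0"
  by (simp add: tree_gf_def)

lemma finite_forests: "finite (forests P n)"
  unfolding forests_def by (rule finite_subset[OF _ finite_forests_of_size[of n]]) auto

lemma forests_0: "forests P 0 = {[]}"
  by (auto simp: forests_def)

lemma forests_Suc: "forests P (Suc n) =
  (\<Union>m\<le>n. (\<lambda>(t, ts). t # ts) ` ({t. P t \<and> nodes t = Suc m} \<times> forests P (n - m)))"
proof (intro equalityI subsetI)
  fix xs assume xs: "xs \<in> forests P (Suc n)"
  then obtain t ts where xs_eq: "xs = t # ts" unfolding forests_def by (cases xs) auto
  obtain m where m: "nodes t = Suc m" using nodes_neq_0 not0_implies_Suc by blast
  show "xs \<in> (\<Union>m\<le>n. (\<lambda>(t, ts). t # ts) ` ({t. P t \<and> nodes t = Suc m} \<times> forests P (n - m)))"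
    using xs xs_eq m unfolding forests_def by (auto intro!: bexI[of _ m] image_eqI[of _ _ "(t, ts)"])
qed (auto simp: forests_def)

lemma card_forests_Suc:
  "card (forests P (Suc n)) = (\<Sum>m\<le>n. count_trees P (Suc m) * card (forests P (n - m)))"
proof -
  have "inj_on (\<lambda>(t, ts). t # ts) A" for A :: "(ptree \<times> ptree list) set"
    by (auto simp: inj_on_def)
  then show ?thesis
    unfolding forests_Suc
    by (subst card_UN_disjoint) (auto simp: finite_forests finite_trees_of_size_with card_image
        card_cartesian_product count_trees_def)
qed

lemma forest_gf_eq_inverse: "forest_gf P = inverse (1 - tree_gf P)"
proof -
  have "(1 - tree_gf P) * forest_gf P = 1"
  proof (rule fps_ext)
    fix n
    show "fps_nth ((1 - tree_gf P) * forest_gf P) n = fps_nth 1 n"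
    proof (cases n)
      case 0
      then show ?thesis by (simp add: forest_gf_def forests_0)
    next
      case (Suc k)
      have "fps_nth (tree_gf P * forest_gf P) n
          = (\<Sum>i\<le>Suc k. real (count_trees P i) * real (card (forests P (Suc k - i))))"
        using Suc by (simp add: fps_mult_nth tree_gf_def forest_gf_def atLeast0AtMost)
      also have "\<dots> = (\<Sum>m\<le>k. real (count_trees P (Suc m)) * real (card (forests P (k - m))))"
        by (subst sum.atMost_Suc_shift) simp
      also have "\<dots> = fps_nth (forest_gf P) n"
        using Suc by (simp add: card_forests_Suc forest_gf_def)
      finally show ?thesis
        using Suc by (simp add: algebra_simps)
    qed
  qed
  then show ?thesis by (simp add: fps_inverse_unique)
qed

lemma tree_gf_Node:
  "tree_gf R = fps_X * Abs_fps (\<lambda>n. real (card {ts. R (Node ts) \<and> forest_nodes ts = n}))"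
proof (rule fps_ext)
  fix n
  show "fps_nth (tree_gf R) n
      = fps_nth (fps_X * Abs_fps (\<lambda>n. real (card {ts. R (Node ts) \<and> forest_nodes ts = n}))) n"
  proof (cases n)
    case (Suc k)
    have "{t. R t \<and> nodes t = Suc k} = Node ` {ts. R (Node ts) \<and> forest_nodes ts = k}"
    proof (intro equalityI subsetI)
      fix t assume "t \<in> {t. R t \<and> nodes t = Suc k}"
      then show "t \<in> Node ` {ts. R (Node ts) \<and> forest_nodes ts = k}" by (cases t) auto
    qed auto
    moreover have "inj Node" by (auto intro: injI)
    ultimately show ?thesis
      using Suc by (simp add: tree_gf_def count_trees_def card_image inj_on_subset)
  qed (simp add: tree_gf_def)
qed

lemma tree_gf_Node_forests:
  assumes "\<And>ts. R (Node ts) \<longleftrightarrow> (\<forall>s\<in>set ts. P s)"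
  shows "tree_gf R = fps_X * inverse (1 - tree_gf P)"
proof -
  have "{ts. R (Node ts) \<and> forest_nodes ts = n} = forests P n" for n
    using assms by (auto simp: forests_def)
  then show ?thesis by (simp add: tree_gf_Node[of R] forest_gf_def flip: forest_gf_eq_inverse)
qed

lemma tree_gf_Node_nonempty_forests:
  assumes "\<And>ts. R (Node ts) \<longleftrightarrow> ts \<noteq> [] \<and> (\<forall>s\<in>set ts. P s)"
  shows "tree_gf R = fps_X * (inverse (1 - tree_gf P) - 1)"
proof -
  have "{ts. R (Node ts) \<and> forest_nodes ts = n} = forests P n - {[]}" for n
    using assms by (auto simp: forests_def)
  moreover have "[] \<in> forests P n \<longleftrightarrow> n = 0" for n
    by (auto simp: forests_def)
  ultimately have "Abs_fps (\<lambda>n. real (card {ts. R (Node ts) \<and> forest_nodes ts = n}))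
      = forest_gf P - 1"
    by (intro fps_ext) (simp add: forest_gf_def finite_forests card_Diff_singleton_if forests_0)
  then show ?thesis by (simp add: tree_gf_Node forest_gf_eq_inverse)
qed

section \<open>Trees whose leaves lie at even depth\<close>

lemma height_Node_less_Suc: "height (Node ts) < Suc k \<longleftrightarrow> (\<forall>s\<in>set ts. height s < k)"
  by (auto simp: Max_less_iff)

lemma leaf_depths_ge: "x \<in> leaf_depths d t \<Longrightarrow> d \<le> x"
proof (induction t arbitrary: d)
  case (Node ts)
  then show ?case by (fastforce split: if_splits)
qed

definition even_leaves :: "nat \<Rightarrow> ptree \<Rightarrow> bool" where
  "even_leaves d t \<longleftrightarrow> (\<forall>x\<in>leaf_depths d t. even x)"

lemma even_leaves_Node:
  "even_leaves d (Node ts) \<longleftrightarrow> (if ts = [] then even d else (\<forall>s\<in>set ts. even_leaves (Suc d) s))"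
  by (auto simp: even_leaves_def)

lemma even_leaves_Suc_Suc: "even_leaves (Suc (Suc d)) t = even_leaves d t"
proof (induction t arbitrary: d)
  case (Node ts)
  then show ?case by (simp add: even_leaves_Node)
qed

definition even_leaves_below :: "nat \<Rightarrow> nat \<Rightarrow> ptree \<Rightarrow> bool" where
  "even_leaves_below d k t \<longleftrightarrow> even_leaves d t \<and> height t < k"

lemma even_leaves_below_1_Node:
  "even_leaves_below 1 (Suc k) (Node ts) \<longleftrightarrow> ts \<noteq> [] \<and> (\<forall>s\<in>set ts. even_leaves_below 0 k s)"
  by (auto simp: even_leaves_below_def height_Node_less_Suc even_leaves_Node
      even_leaves_Suc_Suc[of 0, simplified] numeral_2_eq_2)

lemma even_leaves_below_0_Node:
  "even_leaves_below 0 (Suc k) (Node ts) \<longleftrightarrow> (\<forall>s\<in>set ts. even_leaves_below 1 k s)"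
  by (auto simp: even_leaves_below_def height_Node_less_Suc even_leaves_Node)

fun odd_root_gf :: "nat \<Rightarrow> real \<Rightarrow> real" and even_root_gf :: "nat \<Rightarrow> real \<Rightarrow> real" where
  "odd_root_gf 0 z = 0"
| "odd_root_gf (Suc k) z = z * (inverse (1 - even_root_gf k z) - 1)"
| "even_root_gf 0 z = 0"
| "even_root_gf (Suc k) z = z * inverse (1 - odd_root_gf k z)"

lemma root_gf_has_fps_expansion:
  "odd_root_gf k has_fps_expansion tree_gf (even_leaves_below 1 k) \<and>
   even_root_gf k has_fps_expansion tree_gf (even_leaves_below 0 k)"
proof (induction k)
  case 0
  have "tree_gf (even_leaves_below d 0) = 0" for d
    by (simp add: tree_gf_def count_trees_def even_leaves_below_def fps_zero_def)
  then show ?case by (simp add: fun_eq_iff)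
next
  case (Suc k)
  have "odd_root_gf (Suc k) = (\<lambda>z. z * (inverse (1 - even_root_gf k z) - 1))"
   and "even_root_gf (Suc k) = (\<lambda>z. z * inverse (1 - odd_root_gf k z))"
    by (simp_all add: fun_eq_iff)
  with Suc show ?case
    unfolding tree_gf_Node_forests[OF even_leaves_below_0_Node]
      tree_gf_Node_nonempty_forests[OF even_leaves_below_1_Node]
    by (auto intro!: fps_expansion_intros)
qed

section \<open>Retakh trees\<close>

lemma tree_gf_leaf_or:
  assumes "\<not> P (Node [])"
  shows "tree_gf (\<lambda>s. s = Node [] \<or> P s) = fps_X + tree_gf P"
proof (rule fps_ext)
  fix n
  have "{s. (s = Node [] \<or> P s) \<and> nodes s = n}
      = {s. P s \<and> nodes s = n} \<union> (if n = 1 then {Node []} else {})"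
    by auto
  then show "fps_nth (tree_gf (\<lambda>s. s = Node [] \<or> P s)) n = fps_nth (fps_X + tree_gf P) n"
    using assms finite_trees_of_size_with[of P n]
    by (cases "n = 1") (simp_all add: tree_gf_def count_trees_def fps_X_nth)
qed

lemma retakh_child_iff:
  "(\<forall>d\<in>leaf_depths 1 s. d = 1 \<or> even d) \<longleftrightarrow> s = Node [] \<or> even_leaves 1 s"
proof (cases s)
  case (Node us)
  have "2 \<le> d" if "us \<noteq> []" "d \<in> leaf_depths 1 s" for d
    using that Node by (auto simp: numeral_2_eq_2 dest!: leaf_depths_ge)
  then show ?thesis using Node unfolding even_leaves_def by (cases "us = []") fastforce+
qed

lemma retakh_height_le_Node:
  assumes "H \<ge> 1"
  shows "retakh (Node ts) \<and> height (Node ts) \<le> H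
    \<longleftrightarrow> (\<forall>s\<in>set ts. s = Node [] \<or> even_leaves_below 1 H s)"
proof -
  have "retakh (Node ts) \<longleftrightarrow> (\<forall>s\<in>set ts. s = Node [] \<or> even_leaves 1 s)"
    unfolding retakh_def by (simp only: ptree.case retakh_child_iff)
  moreover have "height (Node ts) \<le> H \<longleftrightarrow> (\<forall>s\<in>set ts. height s < H)"
    using height_Node_less_Suc[of ts H] by (simp add: less_Suc_eq_le)
  ultimately show ?thesis
    using assms by (auto simp: even_leaves_below_def)
qed

lemma retakh_count_fps:
  assumes "H \<ge> 1"
  shows "Abs_fps (\<lambda>n. real (retakh_count H n))
    = fps_X * inverse (1 - (fps_X + tree_gf (even_leaves_below 1 H)))"
proof -
  have "\<not> even_leaves_below 1 H (Node [])"
    by (simp add: even_leaves_below_def even_leaves_def)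
  then have "tree_gf (\<lambda>t. retakh t \<and> height t \<le> H)
      = fps_X * inverse (1 - (fps_X + tree_gf (even_leaves_below 1 H)))"
    using retakh_height_le_Node[OF assms]
    by (simp add: tree_gf_Node_forests flip: tree_gf_leaf_or)
  moreover have "{t. retakh t \<and> nodes t = n \<and> height t \<le> H}
      = {t. (retakh t \<and> height t \<le> H) \<and> nodes t = n}" for n
    by auto
  ultimately show ?thesis
    by (simp add: tree_gf_def count_trees_def retakh_count_def)
qed

lemma retakh_gf_has_fps_expansion:
  assumes "H \<ge> 1"
  shows "(\<lambda>z. z * inverse (1 - (z + odd_root_gf H z)))
    has_fps_expansion Abs_fps (\<lambda>n. real (retakh_count H n))"
  unfolding retakh_count_fps[OF assms]
  using root_gf_has_fps_expansion[of H] by (auto intro!: fps_expansion_intros)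

lemma has_fps_expansion_sums:
  fixes F :: "'a :: {banach, real_normed_div_algebra} fps"
  assumes "f has_fps_expansion F"
  shows "\<exists>r>0. \<forall>z. norm z < r \<longrightarrow> (\<lambda>n. fps_nth F n * z ^ n) sums f z"
proof -
  from assms have "0 < fps_conv_radius F" and "eventually (\<lambda>z. eval_fps F z = f z) (nhds 0)"
    by (auto simp: has_fps_expansion_def)
  then obtain d r where d: "d > 0" "\<And>z. norm z < d \<Longrightarrow> eval_fps F z = f z"
    and r: "0 < ereal r" "ereal r < fps_conv_radius F"
    unfolding eventually_nhds_metric by (metis dist_norm diff_zero ereal_dense2)
  have "(\<lambda>n. fps_nth F n * z ^ n) sums f z" if "norm z < min d r" for z
  proof -
    have "ereal (norm z) < ereal r"
      using that by simp
    then have "ereal (norm z) < fps_conv_radius F"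
      using r(2) by (rule order.strict_trans)
    then show ?thesis using sums_eval_fps d(2) that by fastforce
  qed
  then show ?thesis using d(1) r(1) by (intro exI[of _ "min d r"]) simp
qed

section \<open>The substitution \<open>z = v/(1 + v + v\<^sup>2)\<close>\<close>

lemma vfun_eq_and_abs_less:
  fixes z :: real
  assumes "z \<noteq> 0" "\<bar>z\<bar> < 1/8"
  shows "z * (1 + vfun z + (vfun z)^2) = vfun z" "\<bar>vfun z\<bar> < 1/2"
proof -
  define s where "s = sqrt (1 - 2*z - 3*z^2)"
  have "\<bar>z\<bar>^2 < (1/8)^2"
    using assms(2) by (intro power_strict_mono) auto
  then have "z^2 < 1/64" by (simp add: power2_eq_square)
  then have s: "s^2 = 1 - 2*z - 3*z^2" "s \<ge> 0"
    using assms(2) by (auto simp: s_def abs_less_iff)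
  have v: "vfun z = (1 - z - s) / (2*z)"
    using assms(1) by (simp add: vfun_def motzkinM_def s_def power2_eq_square field_simps)
  show "z * (1 + vfun z + (vfun z)^2) = vfun z"
    unfolding v using assms(1) s by (simp add: field_simps power2_eq_square) algebra
  have "vfun z * (1 - z + s) = 2*z"
    unfolding v using assms(1) s by (simp add: field_simps power2_eq_square)
  moreover have pos: "1 - z + s \<ge> 7/8" using s assms by auto
  ultimately have "\<bar>vfun z\<bar> * (1 - z + s) = 2 * \<bar>z\<bar>"
    by (metis abs_mult abs_of_nonneg abs_numeral order_trans zero_le_divide_iff zero_le_numeral)
  moreover have "\<bar>vfun z\<bar> * (7/8) \<le> \<bar>vfun z\<bar> * (1 - z + s)"
    using pos by (intro mult_left_mono) auto
  ultimately show "\<bar>vfun z\<bar> < 1/2" using assms(2) by linarith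
qed

lemma one_minus_power_neq_0:
  fixes v :: real
  assumes "\<bar>v\<bar> < 1" "n \<ge> 1"
  shows "1 - v^n \<noteq> 0"
proof -
  have "\<bar>v^n\<bar> < 1" using assms by (simp add: power_abs power_less_one_iff)
  then show ?thesis by auto
qed

context
  fixes v z :: real
  assumes z_v: "z * (1 + v + v^2) = v" and abs_v: "\<bar>v\<bar> < 1/2"
begin

private lemma one_plus_v_pos: "1 + v > 0"
  using abs_v by auto

private lemma quadratic_pos: "1 + v + v^2 > 0"
  using one_plus_v_pos by (simp add: add_pos_nonneg)

private lemma z_eq: "z = v / (1 + v + v^2)"
  using z_v quadratic_pos by (simp add: field_simps)

private lemma power_neq_1: "n \<ge> 1 \<Longrightarrow> v^n \<noteq> 1"
  using one_minus_power_neq_0[of v n] abs_v by simp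

private lemma one_minus_Ffun:
  "1 - Ffun h v = (1 + v) * (1 - v^(2*h+3)) / ((1 + v + v^2) * (1 - v^(2*h+2)))"
proof -
  define w where "w = v^(2*h)"
  have w: "v^(2*h+2) = w * v^2" "v^(2*h+3) = w * v^3"
    unfolding w_def power_add by (rule refl)+
  have "1 - w * v^2 \<noteq> 0"
    using power_neq_1[of "2*h+2"] w by auto
  then show ?thesis
    using quadratic_pos unfolding w
    by (simp add: Ffun_def w_def[symmetric] w divide_simps) algebra
qed

lemma inverse_one_minus_Ffun:
  "z * inverse (1 - Ffun h v) = v * (1 - v^(2*h+2)) / ((1 + v) * (1 - v^(2*h+3)))"
proof -
  have "z * inverse (1 - Ffun h v)
      = v / (1 + v + v^2) * ((1 + v + v^2) * (1 - v^(2*h+2)) / ((1 + v) * (1 - v^(2*h+3))))"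
    by (simp only: z_eq one_minus_Ffun inverse_divide)
  also have "\<dots> = v * (1 - v^(2*h+2)) / ((1 + v) * (1 - v^(2*h+3)))"
    using quadratic_pos by simp
  finally show ?thesis .
qed

lemma Ffun_Suc_eq:
  "z * (inverse (1 - v * (1 - v^(2*h+2)) / ((1 + v) * (1 - v^(2*h+3)))) - 1) = Ffun (Suc h) v"
proof -
  define w where "w = v^(2*h)"
  have w: "v^(2*h+2) = w * v^2" "v^(2*h+3) = w * v^3" "v^(2*h+4) = w * v^4"
    unfolding w_def power_add by (rule refl)+
  have nz: "1 - w * v^3 \<noteq> 0" "1 - w * v^4 \<noteq> 0"
    using power_neq_1[of "2*h+3"] power_neq_1[of "2*h+4"] w by auto
  have inv: "inverse (1 - v * (1 - w * v^2) / ((1 + v) * (1 - w * v^3))) - 1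
      = v * (1 - w * v^2) / (1 - w * v^4)"
    using one_plus_v_pos nz by (simp add: divide_simps) algebra
  have "2 * Suc h = 2*h+2" "2 * Suc h + 2 = 2*h+4"
    by simp_all
  then have "Ffun (Suc h) v = v^2 / (1 + v + v^2) * ((1 - w * v^2) / (1 - w * v^4))"
    unfolding Ffun_def by (simp only: w)
  with inv show ?thesis
    unfolding w by (simp add: z_eq power2_eq_square)
qed

lemma odd_root_gf_closed_form: "odd_root_gf (2*h) z = Ffun h v"
proof (induction h)
  case 0
  then show ?case by (simp add: Ffun_def)
next
  case (Suc h)
  have "odd_root_gf (2 * Suc h) z = z * (inverse (1 - z * inverse (1 - odd_root_gf (2*h) z)) - 1)"
    by simp
  then show ?case
    by (simp only: Suc inverse_one_minus_Ffun Ffun_Suc_eq)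
qed

lemma retakh_gf_closed_form:
  "z * inverse (1 - (z + Ffun h v)) = v * (1 - v^(2*h+2)) / (1 - v^(2*h+4))"
proof -
  define w where "w = v^(2*h)"
  have w: "v^(2*h+2) = w * v^2" "v^(2*h+3) = w * v^3" "v^(2*h+4) = w * v^4"
    unfolding w_def power_add by (rule refl)+
  have nz: "1 - w * v^2 \<noteq> 0" "1 - w * v^4 \<noteq> 0"
    using power_neq_1[of "2*h+2"] power_neq_1[of "2*h+4"] w by auto
  have "1 - (z + Ffun h v) = (1 - w * v^4) / ((1 + v + v^2) * (1 - w * v^2))"
    using one_minus_Ffun[of h] quadratic_pos nz unfolding w
    by (simp add: z_eq divide_simps) algebra
  then show ?thesis
    using quadratic_pos nz unfolding w
    by (simp add: z_eq inverse_divide)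
qed

lemma z_div_one_minus_z: "z / (1 - z) = v / (1 + v^2)"
proof -
  have "z * (1 + v^2) = v * (1 - z)"
    using z_v by (simp add: algebra_simps)
  moreover have "1 + v^2 > 0"
    by (rule add_pos_nonneg) simp_all
  ultimately show ?thesis
    by (cases "z = 1") (simp_all add: frac_eq_eq)
qed

end

lemma retakh_count_sums:
  assumes "H \<ge> 1"
  shows "\<exists>r>0. \<forall>z::real. \<bar>z\<bar> < r \<longrightarrow>
    (\<lambda>n. real (retakh_count H n) * z^n) sums (z * inverse (1 - (z + odd_root_gf H z)))"
  using has_fps_expansion_sums[OF retakh_gf_has_fps_expansion[OF assms]] by simp

lemma times_inverse_one_minus_eq:
  fixes z F :: real
  assumes "z \<noteq> 1"
  shows "z / (1 - z) * (1 / (1 - F / (1 - z))) = z * inverse (1 - (z + F))"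
proof -
  have "1 - F / (1 - z) = (1 - (z + F)) / (1 - z)"
    using assms by (simp add: field_simps)
  then show ?thesis
    using assms by (simp add: inverse_eq_divide)
qed

theorem mainTheorem3:
  fixes h :: nat
  shows "\<exists>r>0. \<forall>z::real. z \<noteq> 0 \<and> \<bar>z\<bar> < r \<longrightarrow>
    (let v = vfun z in
      (h = 0 \<longrightarrow>
         (\<lambda>n. real (retakh_count 1 n) * z ^ n) sums (z / (1 - z)) \<and>
         z / (1 - z) = v / (1 + v^2)) \<and>
      (h \<ge> 1 \<longrightarrow>
         (\<lambda>n. real (retakh_count (2*h) n) * z ^ n) sums
            (z / (1 - z) * (1 / (1 - Ffun h v / (1 - z)))) \<and>
         z / (1 - z) * (1 / (1 - Ffun h v / (1 - z))) =
            v * (1 - v^(2*h+2)) / (1 - v^(2*h+4))))"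
  (is "\<exists>r>0. \<forall>z. _ \<longrightarrow> ?claim z")
proof -
  define H where "H = (if h = 0 then 1 else 2*h)"
  have "H \<ge> 1"
    by (simp add: H_def)
  obtain r where "r > 0" and sums: "\<And>z::real. \<bar>z\<bar> < r \<Longrightarrow>
      (\<lambda>n. real (retakh_count H n) * z^n) sums (z * inverse (1 - (z + odd_root_gf H z)))"
    using retakh_count_sums[OF \<open>H \<ge> 1\<close>] by blast
  show ?thesis
  proof (intro exI[of _ "min r (1/8)"] conjI allI impI)
    show "0 < min r (1/8)" using \<open>r > 0\<close> by simp
    fix z :: real
    assume z: "z \<noteq> 0 \<and> \<bar>z\<bar> < min r (1/8)"
    define v where "v = vfun z"
    have z_v: "z * (1 + v + v^2) = v" and abs_v: "\<bar>v\<bar> < 1/2"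
      using vfun_eq_and_abs_less z by (simp_all add: v_def)
    have z_neq_1: "z \<noteq> 1"
      using z by auto
    have "odd_root_gf H z = Ffun h v"
      using odd_root_gf_closed_form[OF z_v abs_v] by (cases "h = 0") (simp_all add: H_def Ffun_def)
    then have "(\<lambda>n. real (retakh_count H n) * z^n) sums (z / (1 - z) * (1 / (1 - Ffun h v / (1 - z))))"
      using sums[of z] z unfolding times_inverse_one_minus_eq[OF z_neq_1] by simp
    moreover have "z / (1 - z) * (1 / (1 - Ffun h v / (1 - z)))
        = v * (1 - v^(2*h+2)) / (1 - v^(2*h+4))"
      unfolding times_inverse_one_minus_eq[OF z_neq_1] by (rule retakh_gf_closed_form[OF z_v abs_v])
    ultimately show "?claim z"
      using z_div_one_minus_z[OF z_v abs_v]
      unfolding Let_def v_def[symmetric] by (cases "h = 0") (simp_all add: H_def Ffun_def)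
  qed
qed

end
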